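(* Let $\Sigma$ be a theory and let $A,B \subseteq \mathcal{T}_Y$ be finite. Then the following are equivalent: (1) $\Sigma \cup \{\emptyset \Rightarrow A\} \vdash \emptyset \Rightarrow B$; (2) there are $i_1,\ldots,i_n \in \mathbb{Z}$ such that $\Sigma \vdash \bigcup_{m=1}^n (A+i_m) \Rightarrow B$.
   Context: $Y$ is a non-empty finite set of attributes and $\mathcal{T}_Y = \{y^i \mid y \in Y, i \in \mathbb{Z}\}$; $M + j = \{y^{i+j} \mid y^i \in M\}$. A formula is $A \Rightarrow B$ with $A,B$ finite subsets of $\mathcal{T}_Y$; a theory is a set of formulas. Deduction rules (for arbitrary finite $A,B,C,D \subseteq \mathcal{T}_Y$, $i \in \mathbb{Z}$): (Ax) infer $A \cup B \Rightarrow A$; (Cut) from $A \Rightarrow B$ and $B \cup C \Rightarrow D$ infer $A \cup C \Rightarrow D$; (Shf) from $A \Rightarrow B$ infer $A+i \Rightarrow B+i$. $\Sigma \vdash A \Rightarrow B$ means there is a finite sequence of formulas ending with $A \Rightarrow B$ in which each member is in $\Sigma$ or is the conclusion of one of these rules applied to earlier members. *)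

theory Defs
  imports Main
begin

(* Attributes range over a finite (hence non-empty) type 'a, playing the role of Y.
   A time-stamped attribute y^i is the pair (y, i). *)
type_synonym 'a tattr = "'a \<times> int"

(* A formula A \<Rightarrow> B is the pair (A, B) of (finite) sets of time-stamped attributes. *)
type_synonym 'a fml = "'a tattr set \<times> 'a tattr set"

definition shift :: "'a tattr set \<Rightarrow> int \<Rightarrow> 'a tattr set" where
  "shift M j = (\<lambda>(y, i). (y, i + j)) ` M"

definition is_fml :: "'a fml \<Rightarrow> bool" where
  "is_fml \<phi> \<longleftrightarrow> finite (fst \<phi>) \<and> finite (snd \<phi>)"

definition is_theory :: "'a fml set \<Rightarrow> bool" where
  "is_theory \<Sigma> \<longleftrightarrow> (\<forall>\<phi>\<in>\<Sigma>. is_fml \<phi>)"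

definition rule_concl :: "'a fml set \<Rightarrow> 'a fml \<Rightarrow> bool" where
  "rule_concl S \<phi> \<longleftrightarrow>
     (\<exists>A B. finite A \<and> finite B \<and> \<phi> = (A \<union> B, A))
   \<or> (\<exists>A B C D. finite A \<and> finite B \<and> finite C \<and> finite D \<and>
        (A, B) \<in> S \<and> (B \<union> C, D) \<in> S \<and> \<phi> = (A \<union> C, D))
   \<or> (\<exists>A B i. finite A \<and> finite B \<and> (A, B) \<in> S \<and> \<phi> = (shift A i, shift B i))"

definition provable :: "'a fml set \<Rightarrow> 'a fml \<Rightarrow> bool" where
  "provable \<Sigma> \<phi> \<longleftrightarrow> (\<exists>fs. fs \<noteq> [] \<and> last fs = \<phi> \<and>
     (\<forall>k < length fs. fs ! k \<in> \<Sigma> \<or> rule_concl (set (take k fs)) (fs ! k)))"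

end

theory Submission
  imports Defs
begin

text \<open>Replace the axiom \<open>\<emptyset> \<Rightarrow> A\<close> by an extra antecedent: by induction on derivations,
  every use of the axiom turns into a use of \<open>A \<union> A \<Rightarrow> A\<close>, and since (Shf) shifts the axiom
  along with everything else, a derivation of \<open>X \<Rightarrow> Y\<close> from \<open>\<Sigma> \<union> {\<emptyset> \<Rightarrow> A}\<close> becomes a derivation
  of \<open>X \<union> \<Union>\<^sub>m (A + i\<^sub>m) \<Rightarrow> Y\<close> from \<open>\<Sigma>\<close>, collecting one shifted copy of \<open>A\<close> per used instance.
  Conversely, \<open>\<emptyset> \<Rightarrow> \<Union>\<^sub>m (A + i\<^sub>m)\<close> is derivable from the axiom by (Shf) and merging consequents,
  and one (Cut) finishes.\<close>

inductive derivable :: "'a fml set \<Rightarrow> 'a fml \<Rightarrow> bool" for S where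
  assm: "\<phi> \<in> S \<Longrightarrow> derivable S \<phi>"
| ax: "finite A \<Longrightarrow> finite B \<Longrightarrow> derivable S (A \<union> B, A)"
| cut: "finite A \<Longrightarrow> finite B \<Longrightarrow> finite C \<Longrightarrow> finite D \<Longrightarrow>
    derivable S (A, B) \<Longrightarrow> derivable S (B \<union> C, D) \<Longrightarrow> derivable S (A \<union> C, D)"
| shf: "finite A \<Longrightarrow> finite B \<Longrightarrow> derivable S (A, B) \<Longrightarrow> derivable S (shift A i, shift B i)"

definition is_derivation :: "'a fml set \<Rightarrow> 'a fml list \<Rightarrow> bool" where
  "is_derivation S fs \<longleftrightarrow>
     (\<forall>k < length fs. fs ! k \<in> S \<or> rule_concl (set (take k fs)) (fs ! k))"

lemma rule_concl_ax: "finite A \<Longrightarrow> finite B \<Longrightarrow> rule_concl S (A \<union> B, A)"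
  unfolding rule_concl_def by (intro disjI1 exI[of _ A] exI[of _ B]) simp

lemma rule_concl_cut:
  "finite A \<Longrightarrow> finite B \<Longrightarrow> finite C \<Longrightarrow> finite D \<Longrightarrow>
    (A, B) \<in> S \<Longrightarrow> (B \<union> C, D) \<in> S \<Longrightarrow> rule_concl S (A \<union> C, D)"
  unfolding rule_concl_def
  by (intro disjI2 disjI1 exI[of _ A] exI[of _ B] exI[of _ C] exI[of _ D]) simp

lemma rule_concl_shf:
  "finite A \<Longrightarrow> finite B \<Longrightarrow> (A, B) \<in> S \<Longrightarrow> rule_concl S (shift A i, shift B i)"
  unfolding rule_concl_def by (intro disjI2 exI[of _ A] exI[of _ B] exI[of _ i]) simp

lemma rule_concl_cases:
  assumes "rule_concl S \<phi>"
  obtains (ax) A B where "finite A" "finite B" "\<phi> = (A \<union> B, A)"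
  | (cut) A B C D where "finite A" "finite B" "finite C" "finite D"
      "(A, B) \<in> S" "(B \<union> C, D) \<in> S" "\<phi> = (A \<union> C, D)"
  | (shf) A B i where "finite A" "finite B" "(A, B) \<in> S" "\<phi> = (shift A i, shift B i)"
  using assms unfolding rule_concl_def by (elim disjE exE conjE) auto

lemma rule_concl_mono:
  assumes "S \<subseteq> T" and "rule_concl S \<phi>"
  shows "rule_concl T \<phi>"
  using assms(2)
  by (cases rule: rule_concl_cases)
    (use assms(1) in \<open>auto intro: rule_concl_ax rule_concl_cut rule_concl_shf\<close>)

lemma is_derivation_append:
  assumes "is_derivation S fs" and "is_derivation S gs"
  shows "is_derivation S (fs @ gs)"
  unfolding is_derivation_def
proof (intro allI impI)
  fix k assume k: "k < length (fs @ gs)"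
  show "(fs @ gs) ! k \<in> S \<or> rule_concl (set (take k (fs @ gs))) ((fs @ gs) ! k)"
  proof (cases "k < length fs")
    case True
    with assms(1) show ?thesis by (simp add: is_derivation_def nth_append)
  next
    case False
    let ?j = "k - length fs"
    have "gs ! ?j \<in> S \<or> rule_concl (set (take ?j gs)) (gs ! ?j)"
      using assms(2) k False by (simp add: is_derivation_def)
    moreover have "set (take ?j gs) \<subseteq> set (take k (fs @ gs))"
      using False by simp
    moreover have "(fs @ gs) ! k = gs ! ?j"
      using False by (simp add: nth_append)
    ultimately show ?thesis
      using rule_concl_mono by metis
  qed
qed

lemma is_derivation_snoc:
  assumes "is_derivation S fs" and "\<phi> \<in> S \<or> rule_concl (set fs) \<phi>"
  shows "is_derivation S (fs @ [\<phi>])"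
  using assms by (auto simp: is_derivation_def nth_append less_Suc_eq)

lemma derivable_imp_derivation:
  "derivable S \<phi> \<Longrightarrow> \<exists>fs. fs \<noteq> [] \<and> last fs = \<phi> \<and> is_derivation S fs"
proof (induction rule: derivable.induct)
  case (assm \<phi>)
  then show ?case by (intro exI[of _ "[\<phi>]"]) (simp add: is_derivation_def)
next
  case (ax A B)
  then show ?case
    by (intro exI[of _ "[(A \<union> B, A)]"]) (simp add: is_derivation_def rule_concl_ax)
next
  case (cut A B C D)
  then obtain fs gs where fs: "fs \<noteq> []" "last fs = (A, B)" "is_derivation S fs"
    and gs: "gs \<noteq> []" "last gs = (B \<union> C, D)" "is_derivation S gs" by blast
  have "(A, B) \<in> set (fs @ gs)" "(B \<union> C, D) \<in> set (fs @ gs)"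
    using fs gs by (auto dest: last_in_set)
  then have "rule_concl (set (fs @ gs)) (A \<union> C, D)"
    using cut.hyps by (intro rule_concl_cut)
  with fs gs have "is_derivation S ((fs @ gs) @ [(A \<union> C, D)])"
    by (blast intro: is_derivation_snoc is_derivation_append)
  then show ?case by (intro exI[of _ "(fs @ gs) @ [(A \<union> C, D)]"]) simp
next
  case (shf A B i)
  then obtain fs where fs: "fs \<noteq> []" "last fs = (A, B)" "is_derivation S fs" by blast
  then have "(A, B) \<in> set fs" by (auto dest: last_in_set)
  then have "rule_concl (set fs) (shift A i, shift B i)"
    using shf.hyps by (intro rule_concl_shf)
  with fs have "is_derivation S (fs @ [(shift A i, shift B i)])"
    by (blast intro: is_derivation_snoc)
  then show ?case by (intro exI[of _ "fs @ [(shift A i, shift B i)]"]) simp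
qed

lemma rule_concl_derivable:
  assumes "rule_concl T \<phi>" and "\<And>\<psi>. \<psi> \<in> T \<Longrightarrow> derivable S \<psi>"
  shows "derivable S \<phi>"
  using assms(1)
  by (cases rule: rule_concl_cases) (auto intro: derivable.ax derivable.cut derivable.shf assms(2))

lemma is_derivation_derivable:
  assumes "is_derivation S fs" and "k < length fs"
  shows "derivable S (fs ! k)"
  using assms(2)
proof (induction k rule: less_induct)
  case (less k)
  have "derivable S \<psi>" if "\<psi> \<in> set (take k fs)" for \<psi>
    using that less by (auto simp: in_set_conv_nth)
  with assms(1) less.prems show ?case
    unfolding is_derivation_def by (blast intro: derivable.assm rule_concl_derivable)
qed

lemma provable_iff_derivable: "provable S \<phi> \<longleftrightarrow> derivable S \<phi>"
proof
  assume "provable S \<phi>"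
  then obtain fs where "fs \<noteq> []" "last fs = \<phi>" "is_derivation S fs"
    unfolding provable_def is_derivation_def by blast
  then show "derivable S \<phi>"
    using is_derivation_derivable[of S fs "length fs - 1"] by (simp add: last_conv_nth)
next
  assume "derivable S \<phi>"
  then show "provable S \<phi>"
    using derivable_imp_derivation unfolding provable_def is_derivation_def by blast
qed

lemma derivable_mono: "derivable S \<phi> \<Longrightarrow> S \<subseteq> T \<Longrightarrow> derivable T \<phi>"
proof (induction rule: derivable.induct)
  case (cut A B C D)
  then show ?case by (blast intro: derivable.cut)
qed (auto intro: derivable.assm derivable.ax derivable.shf)

lemma finite_shift [simp]: "finite X \<Longrightarrow> finite (shift X i)"
  by (simp add: shift_def)

lemma shift_empty [simp]: "shift {} i = {}"
  by (simp add: shift_def)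

lemma shift_0 [simp]: "shift X 0 = X"
  by (simp add: shift_def case_prod_beta)

lemma shift_Un: "shift (X \<union> Y) i = shift X i \<union> shift Y i"
  by (simp add: shift_def image_Un)

lemma shift_UN: "shift (\<Union>j\<in>J. F j) i = (\<Union>j\<in>J. shift (F j) i)"
  by (simp add: shift_def image_UN)

lemma shift_shift: "shift (shift X j) i = shift X (j + i)"
  by (simp add: shift_def image_image case_prod_beta add.assoc)

lemma derivable_consequent_Un:
  assumes "derivable S (Z, X)" and "derivable S (Z, Y)"
    and "finite X" and "finite Y" and "finite Z"
  shows "derivable S (Z, X \<union> Y)"
proof -
  have ax: "derivable S (Y \<union> X, X \<union> Y)"
    using derivable.ax[of "X \<union> Y" "X \<union> Y" S] assms(3,4) by (simp add: Un_commute)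
  have "derivable S (Z \<union> X, X \<union> Y)"
    by (rule derivable.cut[OF assms(5,4,3) _ assms(2) ax]) (simp add: assms(3,4))
  then have swapped: "derivable S (X \<union> Z, X \<union> Y)" by (simp add: Un_commute)
  have "derivable S (Z \<union> Z, X \<union> Y)"
    by (rule derivable.cut[OF assms(5,3,5) _ assms(1) swapped]) (simp add: assms(3,4))
  then show ?thesis by simp
qed

lemma derivable_shifted_copies:
  assumes "derivable S ({}, A)" and "finite A"
  shows "derivable S ({}, \<Union>i\<in>set is. shift A i)"
proof (induction "is")
  case Nil
  then show ?case using derivable.ax[of "{}" "{}" S] by simp
next
  case (Cons i "is")
  have "derivable S (shift {} i, shift A i)"
    by (rule derivable.shf[OF _ assms(2) assms(1)]) simp
  then have "derivable S ({}, shift A i \<union> (\<Union>i\<in>set is. shift A i))"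
    by (intro derivable_consequent_Un[OF _ Cons]) (simp_all add: assms(2))
  then show ?case by simp
qed

lemma derivable_from_axiom_imp_antecedent:
  assumes "derivable (S \<union> {({}, A)}) (X, Y)" and "finite A"
  shows "\<exists>is. derivable S (X \<union> (\<Union>i\<in>set is. shift A i), Y)"
  using assms(1)
proof (induction "(X, Y)" arbitrary: X Y rule: derivable.induct)
  case assm
  then consider "(X, Y) \<in> S" | "X = {}" "Y = A" by blast
  then show ?case
  proof cases
    case 1
    then show ?thesis by (intro exI[of _ "[]"]) (simp add: derivable.assm)
  next
    case 2
    then show ?thesis
      using derivable.ax[OF assms(2) assms(2)] by (intro exI[of _ "[0]"]) simp
  qed
next
  case (ax X Y)
  then show ?case by (intro exI[of _ "[]"]) (simp add: derivable.ax)
next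
  case (cut X B C Y)
  then obtain is1 is2
    where left: "derivable S (X \<union> (\<Union>i\<in>set is1. shift A i), B)"
      and right: "derivable S (B \<union> (C \<union> (\<Union>i\<in>set is2. shift A i)), Y)"
    by (auto simp: Un_assoc)
  have "derivable S ((X \<union> (\<Union>i\<in>set is1. shift A i)) \<union> (C \<union> (\<Union>i\<in>set is2. shift A i)), Y)"
    by (rule derivable.cut[OF _ _ _ _ left right]) (simp_all add: cut.hyps assms(2))
  then show ?case by (intro exI[of _ "is1 @ is2"]) (simp add: ac_simps)
next
  case (shf X Y j)
  then obtain "is" where IH: "derivable S (X \<union> (\<Union>i\<in>set is. shift A i), Y)" by blast
  have "derivable S (shift (X \<union> (\<Union>i\<in>set is. shift A i)) j, shift Y j)"
    by (rule derivable.shf[OF _ _ IH]) (simp_all add: shf.hyps assms(2))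
  then show ?case
    by (intro exI[of _ "map (\<lambda>i. i + j) is"]) (simp add: shift_Un shift_UN shift_shift)
qed

theorem theorem11:
  fixes \<Sigma> :: "('a::finite) fml set" and A B :: "'a tattr set"
  assumes "is_theory \<Sigma>" and "finite A" and "finite B"
  shows "provable (\<Sigma> \<union> {({}, A)}) ({}, B) \<longleftrightarrow>
         (\<exists>is :: int list. provable \<Sigma> (\<Union>i\<in>set is. shift A i, B))"
  unfolding provable_iff_derivable
proof
  assume "derivable (\<Sigma> \<union> {({}, A)}) ({}, B)"
  from derivable_from_axiom_imp_antecedent[OF this assms(2)]
  show "\<exists>is. derivable \<Sigma> (\<Union>i\<in>set is. shift A i, B)" by simp
next
  assume "\<exists>is. derivable \<Sigma> (\<Union>i\<in>set is. shift A i, B)"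
  then obtain "is" where "derivable \<Sigma> (\<Union>i\<in>set is. shift A i, B)" by blast
  from derivable_mono[OF this Un_upper1]
  have weakened: "derivable (\<Sigma> \<union> {({}, A)}) (\<Union>i\<in>set is. shift A i, B)" .
  have copies: "derivable (\<Sigma> \<union> {({}, A)}) ({}, \<Union>i\<in>set is. shift A i)"
    by (rule derivable_shifted_copies[OF derivable.assm assms(2)]) simp
  have "derivable (\<Sigma> \<union> {({}, A)}) ({} \<union> {}, B)"
    by (rule derivable.cut[OF _ _ _ _ copies]) (use weakened in \<open>simp_all add: assms(2,3)\<close>)
  then show "derivable (\<Sigma> \<union> {({}, A)}) ({}, B)" by simp
qed

end
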